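(* Let $M=(X,rk)$ be a matroid on a finite ground set $X$ with rank $r=rk(X)$, and let $i$ be a nonnegative integer. Then $d_1(M)>r-i$ if and only if \[[x^i]T_M(x,1)=\binom{|X|-i-1}{r-i}.\]
   Context: $T_M(x,y)=\sum_{A\subseteq X}(x-1)^{r-rk(A)}(y-1)^{|A|-rk(A)}$ is the Tutte polynomial of $M$, and $[x^i]f(x)$ denotes the coefficient of $x^i$. A circuit of $M$ is a set $C\subseteq X$ with $rk(C\setminus\{e\})=|C|-1=rk(C)$ for all $e\in C$. $d_1(M)$ is the minimum size of a circuit of $M$. *)

theory Defs
  imports "HOL-Computational_Algebra.Polynomial" "HOL-Library.Extended_Nat"
begin

definition matroid_rank :: "'a set \<Rightarrow> ('a set \<Rightarrow> nat) \<Rightarrow> bool" where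
  "matroid_rank X rk \<longleftrightarrow> finite X
     \<and> (\<forall>A. A \<subseteq> X \<longrightarrow> rk A \<le> card A)
     \<and> (\<forall>A B. A \<subseteq> B \<and> B \<subseteq> X \<longrightarrow> rk A \<le> rk B)
     \<and> (\<forall>A B. A \<subseteq> X \<and> B \<subseteq> X \<longrightarrow> rk (A \<union> B) + rk (A \<inter> B) \<le> rk A + rk B)"

text \<open>Tutte polynomial T_M(x,y), viewed as a polynomial in x for a fixed value of y.\<close>
definition tutte_poly_x :: "'a set \<Rightarrow> ('a set \<Rightarrow> nat) \<Rightarrow> real \<Rightarrow> real poly" where
  "tutte_poly_x X rk y = (\<Sum>A\<in>Pow X.
      [:-1, 1:] ^ (rk X - rk A) * [: (y - 1) ^ (card A - rk A) :])"

text \<open>Circuits (sizes computed in the integers, so the empty set is not a circuit).\<close>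
definition circuit :: "'a set \<Rightarrow> ('a set \<Rightarrow> nat) \<Rightarrow> 'a set \<Rightarrow> bool" where
  "circuit X rk C \<longleftrightarrow> C \<subseteq> X \<and>
     int (rk C) = int (card C) - 1 \<and>
     (\<forall>e\<in>C. int (rk (C - {e})) = int (card C) - 1)"

text \<open>d_1(M): minimum size of a circuit; \<infinity> if M has no circuit.\<close>
definition d1 :: "'a set \<Rightarrow> ('a set \<Rightarrow> nat) \<Rightarrow> enat" where
  "d1 X rk = Inf {enat (card C) | C. circuit X rk C}"

definition int_binom :: "int \<Rightarrow> int \<Rightarrow> real" where
  "int_binom a b = (if b < 0 then 0 else (of_int a :: real) gchoose (nat b))"

end

theory Submission
  imports Defs
begin

text \<open>
  We prove the stronger statement that \<open>[x^i] T_M(x,1) \<le> C(|X|-i-1, r-i)\<close> for every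
  matroid, with equality exactly when every circuit has more than \<open>r - i\<close> elements, by
  induction on \<open>X\<close>, removing an element \<open>e\<close>.
  A loop leaves \<open>T_M(x,1)\<close> unchanged but is a circuit of size one, while Pascal's rule
  makes the bound grow strictly unless \<open>r \<le> i\<close>. A coloop multiplies \<open>T_M(x,1)\<close> by \<open>x\<close>
  and shifts \<open>i\<close>, \<open>|X|\<close> and \<open>r\<close> by one. Otherwise \<open>T_M = T_{M\e} + T_{M/e}\<close>, which
  matches Pascal's rule for the bound, and \<open>M\<close> has no circuit of size at most \<open>k\<close> iff
  \<open>M\e\<close> has none and \<open>M/e\<close> has none of size at most \<open>k - 1\<close>; so equality holds for
  \<open>M\<close> iff it holds for both minors.
\<close>

section \<open>Rank functions\<close>

lemma card_insert_subset_notin: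
  assumes "finite X" "e \<notin> X" "A \<subseteq> X"
  shows "card (insert e A) = Suc (card A)"
proof -
  have "e \<notin> A" using assms(2,3) by blast
  then show ?thesis using finite_subset[OF assms(3,1)] by simp
qed

lemma matroid_rank_finite: "matroid_rank X rk \<Longrightarrow> finite X"
  by (simp add: matroid_rank_def)

lemma matroid_rank_le_card: "matroid_rank X rk \<Longrightarrow> A \<subseteq> X \<Longrightarrow> rk A \<le> card A"
  by (simp add: matroid_rank_def)

lemma matroid_rank_mono: "matroid_rank X rk \<Longrightarrow> A \<subseteq> B \<Longrightarrow> B \<subseteq> X \<Longrightarrow> rk A \<le> rk B"
  unfolding matroid_rank_def by blast

lemma matroid_rank_submodular:
  "matroid_rank X rk \<Longrightarrow> A \<subseteq> X \<Longrightarrow> B \<subseteq> X \<Longrightarrow> rk (A \<union> B) + rk (A \<inter> B) \<le> rk A + rk B"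
  unfolding matroid_rank_def by blast

lemma matroid_rank_empty: "matroid_rank X rk \<Longrightarrow> rk {} = 0"
  using matroid_rank_le_card[of X rk "{}"] by simp

lemma matroid_rank_subset: "matroid_rank X rk \<Longrightarrow> Y \<subseteq> X \<Longrightarrow> matroid_rank Y rk"
  unfolding matroid_rank_def by (meson finite_subset order_trans)

lemma matroid_rank_insert_le:
  assumes "matroid_rank X rk" "A \<subseteq> X" "e \<in> X"
  shows "rk (insert e A) \<le> Suc (rk A)"
proof -
  have "rk (A \<union> {e}) + rk (A \<inter> {e}) \<le> rk A + rk {e}"
    using matroid_rank_submodular[OF assms(1,2), of "{e}"] assms(3) by auto
  moreover have "rk {e} \<le> 1"
    using matroid_rank_le_card[OF assms(1), of "{e}"] assms(3) by simp
  ultimately show ?thesis by simp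
qed

lemma matroid_rank_insert_loop:
  assumes "matroid_rank X rk" "A \<subseteq> X" "e \<in> X" "rk {e} = 0"
  shows "rk (insert e A) = rk A"
proof -
  have "rk (A \<union> {e}) + rk (A \<inter> {e}) \<le> rk A + rk {e}"
    using matroid_rank_submodular[OF assms(1,2), of "{e}"] assms(3) by auto
  moreover have "rk A \<le> rk (insert e A)"
    using matroid_rank_mono[OF assms(1), of A "insert e A"] assms(2,3) by auto
  ultimately show ?thesis using assms(4) by simp
qed

lemma matroid_rank_insert_coloop:
  assumes m: "matroid_rank (insert e X') rk" and "e \<notin> X'" "rk X' < rk (insert e X')" "A \<subseteq> X'"
  shows "rk (insert e A) = Suc (rk A)"
proof -
  have "rk (X' \<union> insert e A) + rk (X' \<inter> insert e A) \<le> rk X' + rk (insert e A)"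
    using matroid_rank_submodular[OF m, of X' "insert e A"] assms(4) by auto
  moreover have "X' \<union> insert e A = insert e X'" "X' \<inter> insert e A = A"
    using assms(2,4) by auto
  moreover have "rk (insert e A) \<le> Suc (rk A)"
    using matroid_rank_insert_le[OF m, of A e] assms(4) by auto
  ultimately show ?thesis using assms(3) by simp
qed

lemma matroid_rank_indep_subset:
  assumes m: "matroid_rank X rk" and "A \<subseteq> X" "rk A = card A" "B \<subseteq> A"
  shows "rk B = card B"
proof -
  have "finite A" using assms(2) matroid_rank_finite[OF m] finite_subset by blast
  then have "card A = card B + card (A - B)"
    using assms(4) by (metis card_Diff_subset card_mono finite_subset le_add_diff_inverse)
  moreover have "rk A \<le> rk B + rk (A - B)"
    using matroid_rank_submodular[OF m, of B "A - B"] assms(2,4) Un_Diff_cancel2[of B A]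
    by (auto simp: Int_Diff Un_absorb1 matroid_rank_empty[OF m])
  moreover have "rk B \<le> card B" "rk (A - B) \<le> card (A - B)"
    using matroid_rank_le_card[OF m, of B] matroid_rank_le_card[OF m, of "A - B"] assms(2,4)
    by auto
  ultimately show ?thesis using assms(3) by linarith
qed

definition contract_rank :: "('a set \<Rightarrow> nat) \<Rightarrow> 'a \<Rightarrow> 'a set \<Rightarrow> nat" where
  "contract_rank rk e A = rk (insert e A) - 1"

lemma matroid_rank_contract:
  assumes m: "matroid_rank (insert e X') rk" and e: "rk {e} = 1"
  shows "matroid_rank X' (contract_rank rk e)"
proof -
  have ge: "1 \<le> rk (insert e A)" if "A \<subseteq> X'" for A
    using matroid_rank_mono[OF m, of "{e}" "insert e A"] that e by auto
  have "contract_rank rk e A \<le> card A" if "A \<subseteq> X'" for A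
  proof -
    have "rk (insert e A) \<le> card (insert e A)"
      using matroid_rank_le_card[OF m, of "insert e A"] that by auto
    also have "\<dots> \<le> Suc (card A)" by (simp add: card_insert_le_m1)
    finally show ?thesis unfolding contract_rank_def by simp
  qed
  moreover have "contract_rank rk e A \<le> contract_rank rk e B" if "A \<subseteq> B" "B \<subseteq> X'" for A B
  proof -
    have "rk (insert e A) \<le> rk (insert e B)"
      by (rule matroid_rank_mono[OF m]) (use that in auto)
    then show ?thesis unfolding contract_rank_def by simp
  qed
  moreover have "contract_rank rk e (A \<union> B) + contract_rank rk e (A \<inter> B)
      \<le> contract_rank rk e A + contract_rank rk e B" if "A \<subseteq> X'" "B \<subseteq> X'" for A B
  proof -
    have "rk (insert e A \<union> insert e B) + rk (insert e A \<inter> insert e B)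
        \<le> rk (insert e A) + rk (insert e B)"
      using matroid_rank_submodular[OF m, of "insert e A" "insert e B"] that by auto
    moreover have "1 \<le> rk (insert e (A \<union> B))" "1 \<le> rk (insert e (A \<inter> B))"
      using ge[of "A \<union> B"] ge[of "A \<inter> B"] that by auto
    ultimately show ?thesis unfolding contract_rank_def by auto
  qed
  ultimately show ?thesis
    using matroid_rank_finite[OF m] unfolding matroid_rank_def by auto
qed

section \<open>Circuits and girth\<close>

lemma circuit_subset: "circuit X rk C \<Longrightarrow> C \<subseteq> X"
  unfolding circuit_def by simp

lemma circuit_card: "circuit X rk C \<Longrightarrow> card C = Suc (rk C)"
  unfolding circuit_def by simp

lemma circuit_restrict_iff: "Y \<subseteq> X \<Longrightarrow> circuit Y rk C \<longleftrightarrow> circuit X rk C \<and> C \<subseteq> Y"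
  unfolding circuit_def by blast

lemma circuit_finite: "matroid_rank X rk \<Longrightarrow> circuit X rk C \<Longrightarrow> finite C"
  by (metis circuit_subset finite_subset matroid_rank_finite)

lemma circuit_loop: "matroid_rank X rk \<Longrightarrow> e \<in> X \<Longrightarrow> rk {e} = 0 \<Longrightarrow> circuit X rk {e}"
  unfolding circuit_def using matroid_rank_empty[of X rk] by simp

lemma dependent_contains_circuit:
  assumes m: "matroid_rank X rk"
  shows "S \<subseteq> X \<Longrightarrow> rk S < card S \<Longrightarrow> \<exists>C \<subseteq> S. circuit X rk C"
proof (induction "card S" arbitrary: S rule: less_induct)
  case less
  have "finite S" using less.prems matroid_rank_finite[OF m] finite_subset by blast
  show ?case
  proof (cases "\<exists>f\<in>S. rk (S - {f}) < card (S - {f})")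
    case True
    then obtain f where f: "f \<in> S" "rk (S - {f}) < card (S - {f})" by blast
    have "card (S - {f}) < card S" using f \<open>finite S\<close> by (simp add: card_gt_0_iff)
    then show ?thesis using less.hyps[of "S - {f}"] less.prems f by blast
  next
    case False
    have minors: "rk (S - {g}) = card S - 1" if "g \<in> S" for g
    proof -
      have "rk (S - {g}) \<le> card (S - {g})"
        using matroid_rank_le_card[OF m, of "S - {g}"] less.prems(1) by blast
      moreover have "\<not> rk (S - {g}) < card (S - {g})" using False that by blast
      ultimately show ?thesis using that \<open>finite S\<close> by simp
    qed
    have "card S \<noteq> 0" using less.prems(2) by linarith
    then obtain f where "f \<in> S" by fastforce
    have "rk (S - {f}) \<le> rk S"
      using matroid_rank_mono[OF m, of "S - {f}" S] less.prems(1) by blast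
    then have "int (rk S) = int (card S) - 1"
      using minors[OF \<open>f \<in> S\<close>] less.prems(2) by linarith
    then have "circuit X rk S"
      unfolding circuit_def using minors less.prems(1) \<open>card S \<noteq> 0\<close> by auto
    then show ?thesis by blast
  qed
qed

lemma no_circuit_iff_indep:
  assumes m: "matroid_rank X rk"
  shows "(\<forall>C. \<not> circuit X rk C) \<longleftrightarrow> rk X = card X"
proof
  assume no: "\<forall>C. \<not> circuit X rk C"
  have "rk X \<le> card X" using matroid_rank_le_card[OF m order_refl] .
  moreover have "\<not> rk X < card X" using dependent_contains_circuit[OF m order_refl] no by blast
  ultimately show "rk X = card X" by simp
next
  assume indep: "rk X = card X"
  show "\<forall>C. \<not> circuit X rk C"
  proof (intro allI notI)
    fix C assume c: "circuit X rk C"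
    have "rk C = card C"
      using matroid_rank_indep_subset[OF m order_refl indep circuit_subset[OF c]] .
    then show False using circuit_card[OF c] by simp
  qed
qed

lemma circuit_coloop_iff:
  assumes m: "matroid_rank (insert e X') rk" and e: "e \<notin> X'" "rk X' < rk (insert e X')"
  shows "circuit (insert e X') rk C \<longleftrightarrow> circuit X' rk C"
proof -
  have "C \<subseteq> X'" if c: "circuit (insert e X') rk C"
  proof -
    have "e \<notin> C"
    proof
      assume "e \<in> C"
      have "rk (insert e (C - {e})) = Suc (rk (C - {e}))"
        by (rule matroid_rank_insert_coloop[OF m e]) (use circuit_subset[OF c] in auto)
      then have "rk C = Suc (rk (C - {e}))" using \<open>e \<in> C\<close> by (simp add: insert_absorb)
      moreover have "int (rk (C - {e})) = int (card C) - 1"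
        using c \<open>e \<in> C\<close> unfolding circuit_def by blast
      ultimately show False using circuit_card[OF c] by simp
    qed
    then show ?thesis using circuit_subset[OF c] by blast
  qed
  moreover have "X' \<subseteq> insert e X'" by blast
  ultimately show ?thesis using circuit_restrict_iff[of X' "insert e X'" rk C] by blast
qed

lemma circuit_of_contract_circuit:
  assumes m: "matroid_rank (insert e X') rk" and e: "e \<notin> X'" "rk {e} = 1"
    and c: "circuit X' (contract_rank rk e) C'"
  shows "\<exists>C. circuit (insert e X') rk C \<and> card C \<le> Suc (card C')"
proof -
  have sub: "C' \<subseteq> X'" using circuit_subset[OF c] .
  have "finite X'" using matroid_rank_finite[OF m] by simp
  then have fin: "finite (insert e C')" using finite_subset[OF sub] by simp
  have card_ins: "card (insert e C') = Suc (card C')"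
    using card_insert_subset_notin[OF \<open>finite X'\<close> e(1) sub] .
  have "1 \<le> rk (insert e C')"
    using matroid_rank_mono[OF m, of "{e}" "insert e C'"] sub e(2) by auto
  then have "rk (insert e C') < card (insert e C')"
    using circuit_card[OF c] card_ins unfolding contract_rank_def by simp
  then obtain C where C: "C \<subseteq> insert e C'" "circuit (insert e X') rk C"
    using dependent_contains_circuit[OF m, of "insert e C'"] sub by blast
  have "card C \<le> Suc (card C')" using card_mono[OF fin C(1)] card_ins by simp
  then show ?thesis using C(2) by blast
qed

lemma contract_circuit_of_circuit:
  assumes m: "matroid_rank (insert e X') rk" and e: "rk {e} = 1"
    and c: "circuit (insert e X') rk C" and "e \<in> C"
  shows "\<exists>C'. circuit X' (contract_rank rk e) C' \<and> Suc (card C') \<le> card C"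
proof -
  have "finite C" using circuit_finite[OF m c] .
  have sub: "C - {e} \<subseteq> X'" using circuit_subset[OF c] by blast
  have "1 \<le> rk C"
    using matroid_rank_mono[OF m, of "{e}" C] circuit_subset[OF c] \<open>e \<in> C\<close> e by simp
  moreover have "contract_rank rk e (C - {e}) = rk C - 1"
    unfolding contract_rank_def using \<open>e \<in> C\<close> by (simp add: insert_absorb)
  moreover have "card (C - {e}) = rk C"
    using circuit_card[OF c] \<open>e \<in> C\<close> \<open>finite C\<close> by simp
  ultimately obtain C' where C': "C' \<subseteq> C - {e}" "circuit X' (contract_rank rk e) C'"
    using dependent_contains_circuit[OF matroid_rank_contract[OF m e], of "C - {e}"] sub by auto
  have "card C' \<le> card (C - {e})"
    using C'(1) \<open>finite C\<close> by (simp add: card_mono)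
  also have "card (C - {e}) < card C"
    by (rule card_Diff1_less[OF \<open>finite C\<close> \<open>e \<in> C\<close>])
  finally show ?thesis using C'(2) by (intro exI[of _ C']) simp
qed

definition girth_gt :: "'a set \<Rightarrow> ('a set \<Rightarrow> nat) \<Rightarrow> nat \<Rightarrow> bool" where
  "girth_gt X rk k \<longleftrightarrow> (\<forall>C. circuit X rk C \<longrightarrow> k < card C)"

lemma girth_gt_0: "girth_gt X rk 0"
  unfolding girth_gt_def by (simp add: circuit_card)

lemma enat_less_Inf_iff: "enat k < Inf S \<longleftrightarrow> (\<forall>x\<in>S. enat k < x)"
proof -
  have "enat k < Inf S \<longleftrightarrow> enat (Suc k) \<le> Inf S" by (simp add: Suc_ile_eq)
  also have "\<dots> \<longleftrightarrow> (\<forall>x\<in>S. enat (Suc k) \<le> x)" by (simp add: le_Inf_iff)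
  also have "\<dots> \<longleftrightarrow> (\<forall>x\<in>S. enat k < x)" by (simp add: Suc_ile_eq)
  finally show ?thesis .
qed

lemma less_d1_iff_girth_gt: "enat k < d1 X rk \<longleftrightarrow> girth_gt X rk k"
  unfolding d1_def girth_gt_def enat_less_Inf_iff by auto

lemma girth_gt_Suc_rank_iff_indep:
  assumes m: "matroid_rank X rk"
  shows "girth_gt X rk (Suc (rk X)) \<longleftrightarrow> rk X = card X"
proof -
  have "card C \<le> Suc (rk X)" if "circuit X rk C" for C
    using circuit_card[OF that] matroid_rank_mono[OF m circuit_subset[OF that] order_refl] by simp
  then have "girth_gt X rk (Suc (rk X)) \<longleftrightarrow> (\<forall>C. \<not> circuit X rk C)"
    unfolding girth_gt_def by fastforce
  then show ?thesis using no_circuit_iff_indep[OF m] by simp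
qed

lemma girth_gt_delete_contract:
  assumes m: "matroid_rank (insert e X') rk" and e: "e \<notin> X'" "rk {e} = 1"
  shows "girth_gt (insert e X') rk k \<longleftrightarrow> girth_gt X' rk k \<and> girth_gt X' (contract_rank rk e) (k - 1)"
proof
  assume g: "girth_gt (insert e X') rk k"
  have "girth_gt X' rk k"
    using g circuit_restrict_iff[of X' "insert e X'"] unfolding girth_gt_def by blast
  moreover have "girth_gt X' (contract_rank rk e) (k - 1)"
    unfolding girth_gt_def
  proof (intro allI impI)
    fix C' assume c': "circuit X' (contract_rank rk e) C'"
    then obtain C where C: "circuit (insert e X') rk C" "card C \<le> Suc (card C')"
      using circuit_of_contract_circuit[OF m e] by blast
    have "k < card C" using g C(1) unfolding girth_gt_def by blast
    then show "k - 1 < card C'" using C(2) circuit_card[OF c'] by linarith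
  qed
  ultimately show "girth_gt X' rk k \<and> girth_gt X' (contract_rank rk e) (k - 1)" ..
next
  assume g: "girth_gt X' rk k \<and> girth_gt X' (contract_rank rk e) (k - 1)"
  show "girth_gt (insert e X') rk k"
    unfolding girth_gt_def
  proof (intro allI impI)
    fix C assume c: "circuit (insert e X') rk C"
    show "k < card C"
    proof (cases "e \<in> C")
      case True
      then obtain C' where C': "circuit X' (contract_rank rk e) C'" "Suc (card C') \<le> card C"
        using contract_circuit_of_circuit[OF m e(2) c] by blast
      have "k - 1 < card C'" using g C'(1) unfolding girth_gt_def by blast
      then show ?thesis using C'(2) by linarith
    next
      case False
      then have "circuit X' rk C"
        using c circuit_subset[OF c] circuit_restrict_iff[of X' "insert e X'"] by blast
      then show ?thesis using g unfolding girth_gt_def by blast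
    qed
  qed
qed

section \<open>Deletion and contraction for the Tutte polynomial\<close>

lemma tutte_poly_x_empty: "tutte_poly_x {} rk y = 1"
  unfolding tutte_poly_x_def by simp

lemma tutte_poly_x_cong:
  "(\<And>A. A \<subseteq> X \<Longrightarrow> rk A = rk' A) \<Longrightarrow> tutte_poly_x X rk y = tutte_poly_x X rk' y"
  unfolding tutte_poly_x_def by (intro sum.cong) auto

lemma tutte_poly_x_insert:
  assumes "finite X'" "e \<notin> X'"
  shows "tutte_poly_x (insert e X') rk y =
    (\<Sum>A\<in>Pow X'. [:-1, 1:] ^ (rk (insert e X') - rk A) * [:(y - 1) ^ (card A - rk A):]) +
    (\<Sum>A\<in>Pow X'. [:-1, 1:] ^ (rk (insert e X') - rk (insert e A))
        * [:(y - 1) ^ (card (insert e A) - rk (insert e A)):])"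
proof -
  define f where "f A = [:-1, 1:] ^ (rk (insert e X') - rk A) * [:(y - 1) ^ (card A - rk A):]" for A
  have "inj_on (insert e) (Pow X')"
    using assms(2) unfolding inj_on_def by (metis PowD insert_ident subsetD)
  moreover have "Pow X' \<inter> insert e ` Pow X' = {}" using assms(2) by auto
  ultimately have "sum f (Pow X' \<union> insert e ` Pow X')
      = sum f (Pow X') + sum (f \<circ> insert e) (Pow X')"
    using assms(1) by (simp add: sum.union_disjoint sum.reindex)
  then show ?thesis unfolding tutte_poly_x_def Pow_insert f_def comp_def .
qed

lemma tutte_poly_x_insert_loop:
  assumes m: "matroid_rank (insert e X') rk" and e: "e \<notin> X'" "rk {e} = 0"
  shows "tutte_poly_x (insert e X') rk y = [:y:] * tutte_poly_x X' rk y"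
proof -
  let ?t = "\<lambda>A. [:-1, 1:] ^ (rk X' - rk A) * [:(y - 1) ^ (card A - rk A):]"
  have fin: "finite X'" using matroid_rank_finite[OF m] by simp
  have rk_ins: "rk (insert e A) = rk A" if "A \<subseteq> X'" for A
    using matroid_rank_insert_loop[OF m _ _ e(2)] that by blast
  have term_ins: "[:-1, 1:] ^ (rk X' - rk (insert e A))
        * [:(y - 1) ^ (card (insert e A) - rk (insert e A)):] = [:y - 1:] * ?t A"
    if "A \<subseteq> X'" for A
  proof -
    have "rk A \<le> card A" using matroid_rank_le_card[OF m, of A] that by blast
    then have "card (insert e A) - rk A = Suc (card A - rk A)"
      using card_insert_subset_notin[OF fin e(1) that] by (simp add: Suc_diff_le)
    then show ?thesis using rk_ins[OF that] by (simp add: algebra_simps)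
  qed
  have "tutte_poly_x (insert e X') rk y = (\<Sum>A\<in>Pow X'. ?t A) + (\<Sum>A\<in>Pow X'. [:y - 1:] * ?t A)"
    unfolding tutte_poly_x_insert[OF fin e(1)] rk_ins[OF order_refl]
    using term_ins by (intro arg_cong2[where f = "(+)"] sum.cong) auto
  also have "\<dots> = tutte_poly_x X' rk y + [:y - 1:] * tutte_poly_x X' rk y"
    unfolding tutte_poly_x_def sum_distrib_left ..
  also have "\<dots> = (1 + [:y - 1:]) * tutte_poly_x X' rk y" by (simp add: distrib_right)
  also have "1 + [:y - 1:] = [:y:]" by (simp add: one_pCons)
  finally show ?thesis .
qed

lemma tutte_poly_x_delete_contract:
  assumes m: "matroid_rank (insert e X') rk" and e: "e \<notin> X'" "rk {e} = 1"
  shows "tutte_poly_x (insert e X') rk y =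
    [:-1, 1:] ^ (rk (insert e X') - rk X') * tutte_poly_x X' rk y
      + tutte_poly_x X' (contract_rank rk e) y"
proof -
  let ?d = "rk (insert e X') - rk X'"
  have fin: "finite X'" using matroid_rank_finite[OF m] by simp
  have "rk X' \<le> rk (insert e X')" using matroid_rank_mono[OF m] by blast
  have deletion_term: "[:-1, 1:] ^ (rk (insert e X') - rk A) * [:(y - 1) ^ (card A - rk A):]
      = [:-1, 1:] ^ ?d * ([:-1, 1:] ^ (rk X' - rk A) * [:(y - 1) ^ (card A - rk A):])"
    if "A \<subseteq> X'" for A
  proof -
    have "rk A \<le> rk X'" using matroid_rank_mono[OF m that] by blast
    then have "rk (insert e X') - rk A = ?d + (rk X' - rk A)"
      using \<open>rk X' \<le> rk (insert e X')\<close> by simp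
    then show ?thesis by (simp add: power_add mult.assoc)
  qed
  have contraction_term: "[:-1, 1:] ^ (rk (insert e X') - rk (insert e A))
        * [:(y - 1) ^ (card (insert e A) - rk (insert e A)):]
      = [:-1, 1:] ^ (contract_rank rk e X' - contract_rank rk e A)
        * [:(y - 1) ^ (card A - contract_rank rk e A):]"
    if "A \<subseteq> X'" for A
  proof -
    have "1 \<le> rk (insert e A)"
      using matroid_rank_mono[OF m, of "{e}" "insert e A"] that e(2) by auto
    moreover have "card (insert e A) = Suc (card A)"
      using card_insert_subset_notin[OF fin e(1) that] .
    ultimately show ?thesis unfolding contract_rank_def by (simp add: Suc_diff_le)
  qed
  have "tutte_poly_x (insert e X') rk y =
      (\<Sum>A\<in>Pow X'. [:-1, 1:] ^ ?d * ([:-1, 1:] ^ (rk X' - rk A) * [:(y - 1) ^ (card A - rk A):])) +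
      tutte_poly_x X' (contract_rank rk e) y"
    unfolding tutte_poly_x_insert[OF fin e(1)] unfolding tutte_poly_x_def
    using deletion_term contraction_term by (intro arg_cong2[where f = "(+)"] sum.cong) auto
  then show ?thesis unfolding tutte_poly_x_def sum_distrib_left .
qed

lemma tutte_poly_x_insert_coloop:
  assumes m: "matroid_rank (insert e X') rk" and e: "e \<notin> X'" "rk X' < rk (insert e X')"
  shows "tutte_poly_x (insert e X') rk y = pCons 0 (tutte_poly_x X' rk y)"
proof -
  have rk_ins: "rk (insert e A) = Suc (rk A)" if "A \<subseteq> X'" for A
    using matroid_rank_insert_coloop[OF m e that] .
  then have "rk {e} = 1" using matroid_rank_empty[OF m] by fastforce
  have "tutte_poly_x X' (contract_rank rk e) y = tutte_poly_x X' rk y"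
    using rk_ins by (intro tutte_poly_x_cong) (simp add: contract_rank_def)
  moreover have "rk (insert e X') - rk X' = 1" using rk_ins[OF order_refl] by simp
  ultimately have "tutte_poly_x (insert e X') rk y
      = [:-1, 1:] * tutte_poly_x X' rk y + tutte_poly_x X' rk y"
    using tutte_poly_x_delete_contract[OF m e(1) \<open>rk {e} = 1\<close>] by simp
  then show ?thesis by (simp add: algebra_simps one_pCons)
qed

section \<open>The binomial bound and its sharpness\<close>

lemma int_binom_of_nat: "int_binom (int a) (int b) = real (a choose b)"
  by (simp add: int_binom_def binomial_gbinomial)

lemma int_binom_pos: "0 \<le> b \<Longrightarrow> b \<le> a \<Longrightarrow> 0 < int_binom a b"
  using int_binom_of_nat[of "nat a" "nat b"] by simp

lemma int_binom_pascal: "int_binom (a + 1) (b + 1) = int_binom a (b + 1) + int_binom a b"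
proof (cases "b < 0")
  case True
  then show ?thesis by (cases "b = -1") (simp_all add: int_binom_def)
next
  case False
  then obtain k where "b = int k" by (metis nonneg_int_cases not_less)
  then have "nat (b + 1) = Suc k" "nat b = k" by auto
  then show ?thesis
    unfolding int_binom_def using gbinomial_Suc_Suc[of "of_int a :: real" k] False by simp
qed

definition coeff_bound :: "nat \<Rightarrow> nat \<Rightarrow> nat \<Rightarrow> real" where
  "coeff_bound n r i = int_binom (int n - int i - 1) (int r - int i)"

lemma coeff_bound_eq_0: "r < i \<Longrightarrow> coeff_bound n r i = 0"
  by (simp add: coeff_bound_def int_binom_def)

lemma coeff_bound_diag: "coeff_bound n r r = 1"
  by (simp add: coeff_bound_def int_binom_def)

lemma coeff_bound_Suc: "coeff_bound (Suc n) (Suc r) (Suc i) = coeff_bound n r i"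
  by (simp add: coeff_bound_def)

lemma coeff_bound_0: "coeff_bound (Suc n) r 0 = real (n choose r)"
  using int_binom_of_nat[of n r] by (simp add: coeff_bound_def)

lemma coeff_bound_pos: "i \<le> r \<Longrightarrow> r < n \<Longrightarrow> 0 < coeff_bound n r i"
  unfolding coeff_bound_def by (rule int_binom_pos) auto

lemma coeff_bound_pascal:
  "coeff_bound (Suc n) (Suc r) i = coeff_bound n (Suc r) i + coeff_bound n r i"
  using int_binom_pascal[of "int n - int i - 1" "int r - int i"]
  by (simp add: coeff_bound_def algebra_simps)

definition coeff_bound_sharp :: "'a set \<Rightarrow> ('a set \<Rightarrow> nat) \<Rightarrow> nat \<Rightarrow> bool" where
  "coeff_bound_sharp X rk i \<longleftrightarrow>
     coeff (tutte_poly_x X rk 1) i \<le> coeff_bound (card X) (rk X) i \<and>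
     (coeff (tutte_poly_x X rk 1) i = coeff_bound (card X) (rk X) i \<longleftrightarrow> girth_gt X rk (rk X - i))"

lemma coeff_bound_sharp_empty: "matroid_rank {} rk \<Longrightarrow> coeff_bound_sharp {} rk i"
  unfolding coeff_bound_sharp_def
  by (cases i) (simp_all add: matroid_rank_empty tutte_poly_x_empty girth_gt_0 coeff_bound_eq_0
      coeff_bound_def int_binom_def)

lemma coeff_bound_sharp_insert_loop:
  assumes m: "matroid_rank (insert e X') rk" and e: "e \<notin> X'" "rk {e} = 0"
    and IH: "coeff_bound_sharp X' rk i"
  shows "coeff_bound_sharp (insert e X') rk i"
proof -
  have fin: "finite X'" using matroid_rank_finite[OF m] by simp
  have T: "tutte_poly_x (insert e X') rk 1 = tutte_poly_x X' rk 1"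
    using tutte_poly_x_insert_loop[OF m e, of 1] by simp
  have r: "rk (insert e X') = rk X'"
    using matroid_rank_insert_loop[OF m _ _ e(2), of X'] by blast
  have n: "card (insert e X') = Suc (card X')" using fin e(1) by simp
  have "girth_gt (insert e X') rk (rk X' - i) \<longleftrightarrow> rk X' \<le> i"
  proof
    assume "girth_gt (insert e X') rk (rk X' - i)"
    then show "rk X' \<le> i"
      using circuit_loop[OF m _ e(2)] unfolding girth_gt_def by fastforce
  qed (simp add: girth_gt_0)
  moreover have "coeff_bound (Suc (card X')) (rk X') i = coeff_bound (card X') (rk X') i"
    if "rk X' \<le> i"
    using that by (cases "rk X' = i") (auto simp: coeff_bound_diag coeff_bound_eq_0)
  moreover have "coeff_bound (card X') (rk X') i < coeff_bound (Suc (card X')) (rk X') i"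
    if "i < rk X'"
  proof -
    obtain r' where r': "rk X' = Suc r'" using \<open>i < rk X'\<close> by (metis less_imp_Suc_add)
    have "rk X' \<le> card X'" using matroid_rank_le_card[OF m, of X'] by blast
    then have "0 < coeff_bound (card X') r' i" using that r' by (intro coeff_bound_pos) auto
    then show ?thesis unfolding r' coeff_bound_pascal by simp
  qed
  ultimately show ?thesis
    using IH unfolding coeff_bound_sharp_def T r n by (cases "rk X' \<le> i") (auto simp: girth_gt_0)
qed

lemma coeff_bound_sharp_insert_coloop:
  assumes m: "matroid_rank (insert e X') rk" and e: "e \<notin> X'" "rk X' < rk (insert e X')"
    and IH: "\<And>j. coeff_bound_sharp X' rk j"
  shows "coeff_bound_sharp (insert e X') rk i"
proof -
  have mD: "matroid_rank X' rk" using matroid_rank_subset[OF m] by blast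
  have T: "tutte_poly_x (insert e X') rk 1 = pCons 0 (tutte_poly_x X' rk 1)"
    using tutte_poly_x_insert_coloop[OF m e] .
  have r: "rk (insert e X') = Suc (rk X')"
    using matroid_rank_insert_coloop[OF m e order_refl] .
  have n: "card (insert e X') = Suc (card X')"
    using matroid_rank_finite[OF m] e(1) by simp
  have girth: "girth_gt (insert e X') rk k \<longleftrightarrow> girth_gt X' rk k" for k
    unfolding girth_gt_def using circuit_coloop_iff[OF m e] by simp
  show ?thesis
  proof (cases i)
    case 0
    have "rk X' \<le> card X'" using matroid_rank_le_card[OF mD order_refl] .
    then have "coeff_bound (Suc (card X')) (Suc (rk X')) 0 = 0 \<longleftrightarrow> rk X' = card X'"
      unfolding coeff_bound_0 by auto
    then show ?thesis
      unfolding coeff_bound_sharp_def T r n girth 0 coeff_bound_0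
      using girth_gt_Suc_rank_iff_indep[OF mD] by auto
  next
    case (Suc j)
    then show ?thesis
      using IH[of j] unfolding coeff_bound_sharp_def T r n girth Suc by (simp add: coeff_bound_Suc)
  qed
qed

lemma coeff_bound_sharp_delete_contract:
  assumes m: "matroid_rank (insert e X') rk" and e: "e \<notin> X'" "rk {e} = 1"
    and r: "rk X' = rk (insert e X')"
    and IH_delete: "coeff_bound_sharp X' rk i"
    and IH_contract: "coeff_bound_sharp X' (contract_rank rk e) i"
  shows "coeff_bound_sharp (insert e X') rk i"
proof -
  have T: "tutte_poly_x (insert e X') rk 1
      = tutte_poly_x X' rk 1 + tutte_poly_x X' (contract_rank rk e) 1"
    using tutte_poly_x_delete_contract[OF m e, of 1] r by simp
  have n: "card (insert e X') = Suc (card X')"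
    using matroid_rank_finite[OF m] e(1) by simp
  have "1 \<le> rk (insert e X')" using matroid_rank_mono[OF m, of "{e}"] e(2) by simp
  then obtain r' where r': "rk (insert e X') = Suc r'" by (metis Suc_le_D One_nat_def)
  have rC: "contract_rank rk e X' = r'" unfolding contract_rank_def using r' by simp
  have B: "coeff_bound (card (insert e X')) (rk (insert e X')) i
      = coeff_bound (card X') (rk X') i + coeff_bound (card X') (contract_rank rk e X') i"
    unfolding n r' rC r coeff_bound_pascal ..
  have G: "girth_gt (insert e X') rk (rk (insert e X') - i)
      \<longleftrightarrow> girth_gt X' rk (rk X' - i) \<and> girth_gt X' (contract_rank rk e) (contract_rank rk e X' - i)"
    unfolding girth_gt_delete_contract[OF m e] r' rC r
    by (simp add: diff_Suc_1[symmetric] diff_commute)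
  show ?thesis
    using IH_delete IH_contract unfolding coeff_bound_sharp_def T B G coeff_add by linarith
qed

lemma coeff_bound_sharp:
  assumes "matroid_rank X rk"
  shows "coeff_bound_sharp X rk i"
  using matroid_rank_finite[OF assms] assms
proof (induction X arbitrary: rk i rule: finite_induct)
  case empty
  then show ?case by (rule coeff_bound_sharp_empty)
next
  case (insert e X')
  have IH: "coeff_bound_sharp X' rk' j" if "matroid_rank X' rk'" for rk' j
    using insert.IH[OF that] .
  have "rk {e} \<le> 1" using matroid_rank_le_card[OF insert.prems, of "{e}"] by simp
  moreover have "rk X' \<le> rk (insert e X')" using matroid_rank_mono[OF insert.prems] by blast
  ultimately consider (loop) "rk {e} = 0" | (coloop) "rk X' < rk (insert e X')"
    | (other) "rk {e} = 1" "rk X' = rk (insert e X')"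
    by linarith
  then show ?case
  proof cases
    case loop
    then show ?thesis
      using coeff_bound_sharp_insert_loop[OF insert.prems insert.hyps(2)] IH
        matroid_rank_subset[OF insert.prems] by blast
  next
    case coloop
    then show ?thesis
      using coeff_bound_sharp_insert_coloop[OF insert.prems insert.hyps(2)] IH
        matroid_rank_subset[OF insert.prems] by blast
  next
    case other
    then show ?thesis
      using coeff_bound_sharp_delete_contract[OF insert.prems insert.hyps(2)] IH
        matroid_rank_subset[OF insert.prems] matroid_rank_contract[OF insert.prems] by blast
  qed
qed

theorem theorem3p5:
  fixes X :: "'a set" and rk :: "'a set \<Rightarrow> nat" and i :: nat
  assumes "matroid_rank X rk"
  shows "(int (rk X) - int i < 0 \<or> enat (rk X - i) < d1 X rk)
     \<longleftrightarrow> coeff (tutte_poly_x X rk 1) i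
           = int_binom (int (card X) - int i - 1) (int (rk X) - int i)"
proof -
  have "(int (rk X) - int i < 0 \<or> enat (rk X - i) < d1 X rk) \<longleftrightarrow> girth_gt X rk (rk X - i)"
    using girth_gt_0[of X rk] by (auto simp: less_d1_iff_girth_gt)
  also have "\<dots> \<longleftrightarrow> coeff (tutte_poly_x X rk 1) i = coeff_bound (card X) (rk X) i"
    using coeff_bound_sharp[OF assms, of i] unfolding coeff_bound_sharp_def by blast
  finally show ?thesis unfolding coeff_bound_def .
qed

end
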